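(* Let $\overline X$ be a triangle-free, square-free simplicial graph no connected component of which is a single vertex, and let $X$ be the blowup of $\overline X$ with respect to non-empty graphs $\{L_v\}$. Let $\Sigma,\Delta$ be non-maximal simplices of $X$. Then there exist (possibly empty or maximal) simplices $\Pi,\Psi$ of $X$ with $\Sigma\subseteq\Pi$ such that $\mathrm{Lk}(\Sigma)\cap\mathrm{Lk}(\Delta)=\mathrm{Lk}(\Pi)\star\Psi$.
   Context: Graphs are simplicial; a simplex is a (possibly empty) clique. For a simplex $\Delta$, $\mathrm{Lk}(\Delta)$ is the subgraph spanned by vertices not in $\Delta$ adjacent to every vertex of $\Delta$ ($\mathrm{Lk}(\emptyset)=X$). $\star$ denotes join. Blowup: $X$ is obtained from $\overline X$ by replacing each vertex $v$ by $\mathrm{Squid}(v)$, the star with centre $v$ and leaf set $L_v^{(0)}$ (no edges among leaves). For $\overline X$-adjacent $v,w$, every vertex of $\mathrm{Squid}(v)$ is adjacent to every vertex of $\mathrm{Squid}(w)$; there are no other edges. *)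

theory Defs
  imports Main
begin

type_synonym 'a graph = "'a set \<times> ('a \<Rightarrow> 'a \<Rightarrow> bool)"

definition simplicial_graph :: "'a set \<Rightarrow> ('a \<Rightarrow> 'a \<Rightarrow> bool) \<Rightarrow> bool" where
  "simplicial_graph V E \<longleftrightarrow>
     (\<forall>x y. E x y \<longrightarrow> x \<in> V \<and> y \<in> V) \<and>
     (\<forall>x y. E x y \<longrightarrow> E y x) \<and> (\<forall>x. \<not> E x x)"

definition triangle_free :: "'a set \<Rightarrow> ('a \<Rightarrow> 'a \<Rightarrow> bool) \<Rightarrow> bool" where
  "triangle_free V E \<longleftrightarrow>
     \<not> (\<exists>a\<in>V. \<exists>b\<in>V. \<exists>c\<in>V. E a b \<and> E b c \<and> E c a)"

definition square_free :: "'a set \<Rightarrow> ('a \<Rightarrow> 'a \<Rightarrow> bool) \<Rightarrow> bool" where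
  "square_free V E \<longleftrightarrow>
     \<not> (\<exists>a\<in>V. \<exists>b\<in>V. \<exists>c\<in>V. \<exists>d\<in>V. a \<noteq> c \<and> b \<noteq> d \<and>
          E a b \<and> E b c \<and> E c d \<and> E d a \<and> \<not> E a c \<and> \<not> E b d)"

definition no_isolated_vertex :: "'a set \<Rightarrow> ('a \<Rightarrow> 'a \<Rightarrow> bool) \<Rightarrow> bool" where
  "no_isolated_vertex V E \<longleftrightarrow> (\<forall>v\<in>V. \<exists>w\<in>V. E v w)"

definition simplex :: "'a set \<Rightarrow> ('a \<Rightarrow> 'a \<Rightarrow> bool) \<Rightarrow> 'a set \<Rightarrow> bool" where
  "simplex V E S \<longleftrightarrow> finite S \<and> S \<subseteq> V \<and> (\<forall>x\<in>S. \<forall>y\<in>S. x \<noteq> y \<longrightarrow> E x y)"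

definition maximal_simplex :: "'a set \<Rightarrow> ('a \<Rightarrow> 'a \<Rightarrow> bool) \<Rightarrow> 'a set \<Rightarrow> bool" where
  "maximal_simplex V E S \<longleftrightarrow> simplex V E S \<and> (\<forall>T. simplex V E T \<and> S \<subseteq> T \<longrightarrow> T = S)"

definition induced :: "('a \<Rightarrow> 'a \<Rightarrow> bool) \<Rightarrow> 'a set \<Rightarrow> 'a graph" where
  "induced E W = (W, \<lambda>x y. x \<in> W \<and> y \<in> W \<and> E x y)"

definition link :: "'a set \<Rightarrow> ('a \<Rightarrow> 'a \<Rightarrow> bool) \<Rightarrow> 'a set \<Rightarrow> 'a graph" where
  "link V E S = induced E {x \<in> V. x \<notin> S \<and> (\<forall>s\<in>S. E x s)}"

definition graph_inter :: "'a graph \<Rightarrow> 'a graph \<Rightarrow> 'a graph" where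
  "graph_inter G H = (fst G \<inter> fst H, \<lambda>x y. snd G x y \<and> snd H x y)"

text \<open>Join of two vertex-disjoint graphs on a common vertex type: union plus all
edges between the two vertex sets. (Disjointness is required separately.)\<close>
definition graph_join :: "'a graph \<Rightarrow> 'a graph \<Rightarrow> 'a graph" where
  "graph_join G H = (fst G \<union> fst H,
     \<lambda>x y. snd G x y \<or> snd H x y \<or> (x \<in> fst G \<and> y \<in> fst H) \<or> (x \<in> fst H \<and> y \<in> fst G))"

text \<open>Blowup of (VB, EB) w.r.t. leaf sets L v. The centre of Squid(v) is (v, None),
a leaf l \<in> L v of Squid(v) is (v, Some l).\<close>
definition blowup_V :: "'v set \<Rightarrow> ('v \<Rightarrow> 'l set) \<Rightarrow> ('v \<times> 'l option) set" where
  "blowup_V VB L = {(v, None) | v. v \<in> VB} \<union> {(v, Some l) | v l. v \<in> VB \<and> l \<in> L v}"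

definition blowup_E :: "'v set \<Rightarrow> ('v \<Rightarrow> 'v \<Rightarrow> bool) \<Rightarrow> ('v \<Rightarrow> 'l set)
     \<Rightarrow> ('v \<times> 'l option) \<Rightarrow> ('v \<times> 'l option) \<Rightarrow> bool" where
  "blowup_E VB EB L p q \<longleftrightarrow> p \<in> blowup_V VB L \<and> q \<in> blowup_V VB L \<and>
     ((fst p = fst q \<and> ((snd p = None \<and> snd q \<noteq> None) \<or> (snd p \<noteq> None \<and> snd q = None)))
      \<or> EB (fst p) (fst q))"

end

theory Submission
  imports Defs
begin

text \<open>
  Put \<open>\<Omega> = \<Sigma> \<union> \<Delta>\<close>, so that \<open>Lk(\<Sigma>) \<inter> Lk(\<Delta>) = Lk(\<Omega>)\<close>. If \<open>\<Omega>\<close> is a simplex, take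
  \<open>\<Pi> = \<Omega>\<close> and \<open>\<Psi> = \<emptyset>\<close>. If \<open>Lk(\<Omega>)\<close> is a simplex (cliques of the blowup have at most four
  vertices), take for \<open>\<Pi>\<close> a maximal simplex containing \<open>\<Sigma>\<close> and \<open>\<Psi> = Lk(\<Omega>)\<close>.

  Otherwise both \<open>\<Omega>\<close> and \<open>Lk(\<Omega>)\<close> contain two distinct non-adjacent vertices. Such a pair
  consists either of two leaves of one squid or of two vertices lying over distinct
  non-adjacent vertices of the base graph, and by triangle- and square-freeness two such base
  vertices have at most one common neighbour, over which every common neighbour in the
  blowup lies. This confines \<open>\<Omega>\<close> to a single squid, to a squid together with an adjacent
  centre, or to the neighbourhood of the leaves of a vertex \<open>w\<close>; in each case \<open>Lk(\<Omega>)\<close> is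
  computed explicitly and equals \<open>Lk(\<Pi>)\<close> for a simplex \<open>\<Pi> \<supseteq> \<Sigma>\<close> with at most three
  vertices, except that in the last case the centre of \<open>w\<close> is split off as \<open>\<Psi>\<close>.
\<close>

lemma in_link_iff: "x \<in> fst (link V E S) \<longleftrightarrow> x \<in> V \<and> x \<notin> S \<and> (\<forall>s\<in>S. E x s)"
  unfolding link_def induced_def by simp

lemma graph_inter_link: "graph_inter (link V E S) (link V E D) = link V E (S \<union> D)"
  unfolding graph_inter_def link_def induced_def by (auto simp: fun_eq_iff)

lemma fst_link_maximal_simplex:
  assumes "\<And>x y. E x y \<Longrightarrow> E y x" "maximal_simplex V E M"
  shows "fst (link V E M) = {}"
proof (rule ccontr)
  assume "fst (link V E M) \<noteq> {}"
  then obtain x where "x \<in> V" "x \<notin> M" "\<forall>s\<in>M. E x s"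
    by (auto simp: in_link_iff)
  then have "simplex V E (insert x M)"
    using assms unfolding maximal_simplex_def simplex_def by auto
  then show False
    using assms(2) \<open>x \<notin> M\<close> unfolding maximal_simplex_def by blast
qed

lemma exists_maximal_simplex_superset:
  assumes "\<And>T. simplex V E T \<Longrightarrow> card T \<le> n" "simplex V E S"
  shows "\<exists>M. maximal_simplex V E M \<and> S \<subseteq> M"
proof -
  obtain M where M: "simplex V E M" "S \<subseteq> M"
    and greatest: "\<And>T. simplex V E T \<and> S \<subseteq> T \<Longrightarrow> card T \<le> card M"
    using ex_has_greatest_nat[of "\<lambda>T. simplex V E T \<and> S \<subseteq> T" S card "Suc n"] assms
    by (metis le_imp_less_Suc order_refl)
  have "maximal_simplex V E M"
    unfolding maximal_simplex_def
    using M greatest by (metis card_seteq simplex_def subset_trans)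
  with M show ?thesis by blast
qed

lemma simplex_union_adjacent:
  assumes "simplex V E S" "simplex V E D" "p \<in> S \<union> D" "q \<in> S \<union> D" "r \<in> S \<union> D"
    and "\<not> E p q" "p \<noteq> q" "r \<noteq> p" "r \<noteq> q"
  shows "E r p \<or> E r q"
  using assms unfolding simplex_def by blast

lemma finite_card_le_2_if_no_three:
  assumes "\<And>a b c. a \<in> A \<Longrightarrow> b \<in> A \<Longrightarrow> c \<in> A \<Longrightarrow> a \<noteq> b \<Longrightarrow> a \<noteq> c \<Longrightarrow> b \<noteq> c \<Longrightarrow> False"
  shows "finite A \<and> card A \<le> 2"
proof -
  obtain a b where "A \<subseteq> {a, b}"
    using assms by (metis insertCI subsetI)
  moreover have "card {a, b} \<le> 2"
    by (simp add: card_insert_if)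
  ultimately show ?thesis
    by (meson card_mono finite.emptyI finite_insert finite_subset le_trans)
qed

text \<open>\<open>Lk(\<Omega>) = Lk(P) \<star> Q\<close>, stated on vertex sets.\<close>

definition link_is_join :: "'a set \<Rightarrow> ('a \<Rightarrow> 'a \<Rightarrow> bool) \<Rightarrow> 'a set \<Rightarrow> 'a set \<Rightarrow> 'a set \<Rightarrow> bool" where
  "link_is_join V E \<Omega> P Q \<longleftrightarrow> simplex V E P \<and> simplex V E Q \<and> fst (link V E P) \<inter> Q = {} \<and>
     fst (link V E \<Omega>) = fst (link V E P) \<union> Q \<and> (\<forall>x\<in>fst (link V E P). \<forall>y\<in>Q. E x y)"

lemma link_is_join_graph_join:
  assumes sym: "\<And>x y. E x y \<Longrightarrow> E y x" and "link_is_join V E \<Omega> P Q"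
  shows "link V E \<Omega> = graph_join (link V E P) (induced E Q)"
proof -
  have link_induced: "link V E S = induced E (fst (link V E S))" for S
    unfolding link_def induced_def by simp
  have split: "fst (link V E \<Omega>) = fst (link V E P) \<union> Q"
    and cross: "\<forall>x\<in>fst (link V E P). \<forall>y\<in>Q. E x y"
    using assms(2) unfolding link_is_join_def by blast+
  show ?thesis
    apply (subst (1 2) link_induced)
    unfolding graph_join_def induced_def split
    apply (simp add: fun_eq_iff)
    using cross sym by blast
qed

lemma link_is_join_simplex: "simplex V E \<Omega> \<Longrightarrow> link_is_join V E \<Omega> \<Omega> {}"
  unfolding link_is_join_def simplex_def by simp

lemma link_is_join_maximal_simplex:
  assumes "\<And>x y. E x y \<Longrightarrow> E y x" "maximal_simplex V E M" "simplex V E (fst (link V E \<Omega>))"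
  shows "link_is_join V E \<Omega> M (fst (link V E \<Omega>))"
  using assms fst_link_maximal_simplex[OF assms(1,2)]
  unfolding link_is_join_def maximal_simplex_def by simp

lemma link_is_join_same_link:
  "simplex V E P \<Longrightarrow> fst (link V E P) = fst (link V E \<Omega>) \<Longrightarrow> link_is_join V E \<Omega> P {}"
  unfolding link_is_join_def simplex_def by simp

locale triangle_square_free_graph =
  fixes VB :: "'v set" and EB :: "'v \<Rightarrow> 'v \<Rightarrow> bool"
  assumes simplicial: "simplicial_graph VB EB"
    and tri_free: "triangle_free VB EB"
    and sq_free: "square_free VB EB"
begin

lemma edge_in_VB: "EB a b \<Longrightarrow> a \<in> VB \<and> b \<in> VB"
  and edge_sym: "EB a b \<Longrightarrow> EB b a"
  and edge_irrefl: "\<not> EB a a"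
  using simplicial unfolding simplicial_graph_def by blast+

lemma no_triangle: "EB a b \<Longrightarrow> EB b c \<Longrightarrow> EB c a \<Longrightarrow> False"
  using tri_free edge_in_VB unfolding triangle_free_def by blast

lemma common_neighbour_unique:
  assumes "EB c a" "EB c b" "EB d a" "EB d b" "a \<noteq> b" "\<not> EB a b"
  shows "c = d"
proof (rule ccontr)
  assume "c \<noteq> d"
  moreover have "\<not> EB c d"
    using no_triangle assms edge_sym by blast
  ultimately show False
    using sq_free assms edge_in_VB[OF assms(1)] edge_in_VB[OF assms(4)]
      edge_sym[OF assms(2)] edge_sym[OF assms(3)]
    unfolding square_free_def by blast
qed

end

locale blowup = triangle_square_free_graph +
  fixes L :: "'v \<Rightarrow> 'l set"
  assumes leaves_nonempty: "\<forall>v\<in>VB. L v \<noteq> {}"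
begin

abbreviation "V \<equiv> blowup_V VB L"
abbreviation "E \<equiv> blowup_E VB EB L"

lemma centre_in_V [simp]: "(a, None) \<in> V \<longleftrightarrow> a \<in> VB"
  and leaf_in_V [simp]: "(a, Some l) \<in> V \<longleftrightarrow> a \<in> VB \<and> l \<in> L a"
  unfolding blowup_V_def by auto

lemma E_iff: "E x y \<longleftrightarrow> x \<in> V \<and> y \<in> V \<and>
    (fst x = fst y \<and> (snd x = None) \<noteq> (snd y = None) \<or> EB (fst x) (fst y))"
  unfolding blowup_E_def by auto

lemma E_centre_centre [simp]: "E (a, None) (b, None) \<longleftrightarrow> EB a b"
  and E_centre_leaf [simp]: "E (a, None) (b, Some l) \<longleftrightarrow> b \<in> VB \<and> l \<in> L b \<and> (a = b \<or> EB a b)"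
  and E_leaf_centre [simp]: "E (a, Some l) (b, None) \<longleftrightarrow> a \<in> VB \<and> l \<in> L a \<and> (a = b \<or> EB a b)"
  and E_leaf_leaf [simp]: "E (a, Some l) (b, Some m) \<longleftrightarrow> l \<in> L a \<and> m \<in> L b \<and> EB a b"
  unfolding E_iff using edge_in_VB by auto

lemma E_sym: "E x y \<Longrightarrow> E y x"
  unfolding E_iff using edge_sym by auto

lemma E_over_edge: "x \<in> V \<Longrightarrow> y \<in> V \<Longrightarrow> EB (fst x) (fst y) \<Longrightarrow> E x y"
  by (simp add: E_iff)

lemma E_centre_own_leaf: "y \<in> V \<Longrightarrow> fst y = v \<Longrightarrow> y \<noteq> (v, None) \<Longrightarrow> E (v, None) y"
  by (cases y) (auto simp: E_iff)

lemma E_same_base: "E x y \<Longrightarrow> fst x = fst y \<Longrightarrow> (snd x = None) \<noteq> (snd y = None)"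
  by (simp add: E_iff edge_irrefl)

lemma E_distinct_base: "E x y \<Longrightarrow> fst x \<noteq> fst y \<Longrightarrow> EB (fst x) (fst y)"
  by (simp add: E_iff)

lemma clique_finite_card_le_4:
  assumes clique: "\<forall>x\<in>C. \<forall>y\<in>C. x \<noteq> y \<longrightarrow> E x y"
  shows "finite C \<and> card C \<le> 4"
proof -
  have base_edge: "EB (fst u) (fst w)" if "u \<in> C" "w \<in> C" "fst u \<noteq> fst w" for u w
    using clique that by (metis E_distinct_base)
  have bases: "finite (fst ` C) \<and> card (fst ` C) \<le> 2"
  proof (rule finite_card_le_2_if_no_three)
    fix a b c assume "a \<in> fst ` C" "b \<in> fst ` C" "c \<in> fst ` C" "a \<noteq> b" "a \<noteq> c" "b \<noteq> c"
    then have "EB a b" "EB b c" "EB c a"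
      using base_edge by auto
    then show False
      using no_triangle by blast
  qed
  have fibres: "finite (C \<inter> {x. fst x = a}) \<and> card (C \<inter> {x. fst x = a}) \<le> 2" for a
  proof (rule finite_card_le_2_if_no_three)
    fix x y z assume xyz: "x \<in> C \<inter> {x. fst x = a}" "y \<in> C \<inter> {x. fst x = a}" "z \<in> C \<inter> {x. fst x = a}"
      "x \<noteq> y" "x \<noteq> z" "y \<noteq> z"
    then have "E x y" "E y z" "E x z"
      using clique by blast+
    moreover have "fst x = fst y" "fst y = fst z" "fst x = fst z"
      using xyz by auto
    \<comment> \<open>adjacent vertices over one base differ in being a centre, impossible for three\<close>
    ultimately show False
      using E_same_base by metis
  qed
  have C_fibres: "C = (\<Union>a\<in>fst ` C. C \<inter> {x. fst x = a})"
    by blast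
  have "finite C"
    using bases fibres by (subst C_fibres) (intro finite_UN_I; simp)
  have "card C \<le> (\<Sum>a\<in>fst ` C. card (C \<inter> {x. fst x = a}))"
    using bases card_UN_le by (subst C_fibres) blast
  also have "\<dots> \<le> 2 * card (fst ` C)"
    using sum_bounded_above[of "fst ` C" "\<lambda>a. card (C \<inter> {x. fst x = a})" 2] fibres by simp
  also have "\<dots> \<le> 4"
    using bases by linarith
  finally show ?thesis
    using \<open>finite C\<close> by blast
qed

lemma neighbour_of_leaf: "E (w, Some m) r \<Longrightarrow> r = (w, None) \<or> EB (fst r) w"
  by (cases r) (auto simp: E_iff edge_sym)

lemma common_neighbour_of_distant:
  assumes "fst x \<noteq> fst y" "\<not> EB (fst x) (fst y)" "E x r" "E y r"
  shows "EB (fst r) (fst x) \<and> EB (fst r) (fst y)"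
  using assms by (metis E_distinct_base edge_sym)

lemma non_adjacent_cases [consumes 4, case_names leaves distant]:
  assumes "p \<in> V" "q \<in> V" "p \<noteq> q" "\<not> E p q"
  obtains (leaves) v l m where "p = (v, Some l)" "q = (v, Some m)" "l \<noteq> m"
    | (distant) "fst p \<noteq> fst q" "\<not> EB (fst p) (fst q)"
  using assms by (cases p; cases q; cases "snd p"; cases "snd q") (auto simp: E_iff)

lemma base_neighbour_in_link:
  assumes "x \<in> V" "\<Omega> \<subseteq> V" "\<forall>s\<in>\<Omega>. EB (fst x) (fst s)"
  shows "x \<in> fst (link V E \<Omega>)"
  using assms edge_irrefl E_over_edge unfolding in_link_iff by blast

lemma centre_in_link:
  assumes "w \<in> VB" "\<Omega> \<subseteq> V" "(w, None) \<notin> \<Omega>" "\<forall>s\<in>\<Omega>. fst s = w \<or> EB (fst s) w"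
  shows "(w, None) \<in> fst (link V E \<Omega>)"
  unfolding in_link_iff
  using assms E_centre_own_leaf E_over_edge[of "(w, None)"] edge_sym by fastforce

lemma leaf_in_link:
  assumes "x \<in> V" "snd x \<noteq> None" "\<Omega> \<subseteq> V" "\<forall>s\<in>\<Omega>. s = (fst x, None) \<or> EB (fst s) (fst x)"
  shows "x \<in> fst (link V E \<Omega>)"
proof -
  have "x \<noteq> (fst x, None)"
    using assms(2) by (cases x) auto
  moreover have "\<not> EB (fst x) (fst x)"
    by (rule edge_irrefl)
  ultimately have "x \<notin> \<Omega>"
    using assms(4) by metis
  moreover have "E x s" if "s \<in> \<Omega>" for s
  proof (cases "s = (fst x, None)")
    case True
    then show ?thesis
      using E_centre_own_leaf[OF assms(1) refl \<open>x \<noteq> (fst x, None)\<close>] E_sym by simp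
  next
    case False
    then have "EB (fst x) (fst s)"
      using assms(4) that edge_sym by blast
    then show ?thesis
      using assms(1,3) that E_over_edge by blast
  qed
  ultimately show ?thesis
    using assms(1) unfolding in_link_iff by blast
qed

lemma link_within_squid:
  assumes "\<Omega> \<subseteq> V" "\<forall>s\<in>\<Omega>. fst s = v" "(v, Some l) \<in> \<Omega>"
  shows "fst (link V E \<Omega>) = {x\<in>V. EB (fst x) v} \<union> ({(v, None)} - \<Omega>)"
proof (intro set_eqI iffI)
  fix x assume "x \<in> fst (link V E \<Omega>)"
  then show "x \<in> {x\<in>V. EB (fst x) v} \<union> ({(v, None)} - \<Omega>)"
    using assms neighbour_of_leaf E_sym unfolding in_link_iff by blast
next
  fix x assume "x \<in> {x\<in>V. EB (fst x) v} \<union> ({(v, None)} - \<Omega>)"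
  then consider "x \<in> V" "EB (fst x) v" | "x = (v, None)" "(v, None) \<notin> \<Omega>"
    by blast
  then show "x \<in> fst (link V E \<Omega>)"
  proof cases
    case 1
    then show ?thesis
      using assms(1,2) base_neighbour_in_link by simp
  next
    case 2
    moreover have "v \<in> VB"
      using assms(1,3) by auto
    ultimately show ?thesis
      using assms(1,2) centre_in_link by simp
  qed
qed

lemma link_centre_and_squid:
  assumes "EB u v" "\<Omega> \<subseteq> V" "\<forall>s\<in>\<Omega>. s = (u, None) \<or> fst s = v" "(u, None) \<in> \<Omega>" "(v, Some l) \<in> \<Omega>"
  shows "fst (link V E \<Omega>) = {x\<in>V. fst x = u \<and> snd x \<noteq> None} \<union> ({(v, None)} - \<Omega>)"
proof (intro set_eqI iffI)
  fix x assume x: "x \<in> fst (link V E \<Omega>)"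
  then have "x = (v, None) \<or> EB (fst x) v"
    using assms(5) neighbour_of_leaf E_sym unfolding in_link_iff by blast
  moreover have "E x (u, None)" "x \<in> V" "x \<notin> \<Omega>"
    using x assms(4) unfolding in_link_iff by auto
  moreover have "\<not> EB (fst x) u" if "EB (fst x) v"
    using that assms(1) no_triangle edge_sym by blast
  ultimately show "x \<in> {x\<in>V. fst x = u \<and> snd x \<noteq> None} \<union> ({(v, None)} - \<Omega>)"
    unfolding E_iff by auto
next
  fix x assume "x \<in> {x\<in>V. fst x = u \<and> snd x \<noteq> None} \<union> ({(v, None)} - \<Omega>)"
  then consider "x \<in> V" "fst x = u" "snd x \<noteq> None" | "x = (v, None)" "(v, None) \<notin> \<Omega>"
    by blast
  then show "x \<in> fst (link V E \<Omega>)"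
  proof cases
    case 1
    moreover have "\<forall>s\<in>\<Omega>. s = (u, None) \<or> EB (fst s) u"
      using assms(1,3) edge_sym by auto
    ultimately show ?thesis
      using assms(2) leaf_in_link by simp
  next
    case 2
    moreover have "\<forall>s\<in>\<Omega>. fst s = v \<or> EB (fst s) v"
      using assms(1,3) by auto
    ultimately show ?thesis
      using assms(1,2) edge_in_VB centre_in_link by simp
  qed
qed

lemma neighbours_of_link_leaf:
  "(w, Some m) \<in> fst (link V E \<Omega>) \<Longrightarrow> \<forall>r\<in>\<Omega>. r = (w, None) \<or> EB (fst r) w"
  using neighbour_of_leaf unfolding in_link_iff by blast

lemma link_of_distant_pair_over_leaf_base:
  assumes "p \<in> \<Omega>" "q \<in> \<Omega>" "fst p \<noteq> fst q" "\<not> EB (fst p) (fst q)"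
    and "(w, Some m) \<in> fst (link V E \<Omega>)" "z \<in> fst (link V E \<Omega>)"
  shows "fst z = w"
proof -
  have "p = (w, None) \<or> EB (fst p) w" "q = (w, None) \<or> EB (fst q) w"
    using neighbours_of_link_leaf[OF assms(5)] assms(1,2) by auto
  then have "EB w (fst p)" "EB w (fst q)"
    using assms(3,4) edge_sym by (metis fst_conv)+
  moreover have "E p z" "E q z"
    using assms(1,2,6) E_sym unfolding in_link_iff by blast+
  then have "EB (fst z) (fst p)" "EB (fst z) (fst q)"
    using common_neighbour_of_distant[OF assms(3,4)] by blast+
  ultimately show "fst z = w"
    using common_neighbour_unique[OF _ _ _ _ assms(3,4)] by blast
qed

lemma link_of_distant_pair:
  assumes "\<Omega> \<subseteq> V" "p \<in> \<Omega>" "q \<in> \<Omega>" "fst p \<noteq> fst q" "\<not> EB (fst p) (fst q)"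
    and leaf: "(w, Some m) \<in> fst (link V E \<Omega>)"
  shows "fst (link V E \<Omega>) = {x\<in>V. fst x = w \<and> snd x \<noteq> None} \<union> ({(w, None)} - \<Omega>)"
proof (intro set_eqI iffI)
  fix x assume x: "x \<in> fst (link V E \<Omega>)"
  moreover have "fst x = w"
    using link_of_distant_pair_over_leaf_base[OF assms(2-5) leaf x] .
  ultimately show "x \<in> {x\<in>V. fst x = w \<and> snd x \<noteq> None} \<union> ({(w, None)} - \<Omega>)"
    unfolding in_link_iff by (cases x) auto
next
  note near = neighbours_of_link_leaf[OF leaf]
  fix x assume "x \<in> {x\<in>V. fst x = w \<and> snd x \<noteq> None} \<union> ({(w, None)} - \<Omega>)"
  then consider "x \<in> V" "fst x = w" "snd x \<noteq> None" | "x = (w, None)" "(w, None) \<notin> \<Omega>"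
    by blast
  then show "x \<in> fst (link V E \<Omega>)"
  proof cases
    case 1
    then show ?thesis
      using assms(1) near leaf_in_link by simp
  next
    case 2
    moreover have "w \<in> VB"
      using leaf unfolding in_link_iff by simp
    moreover have "\<forall>s\<in>\<Omega>. fst s = w \<or> EB (fst s) w"
      using near by auto
    ultimately show ?thesis
      using assms(1) centre_in_link by simp
  qed
qed

lemma simplex_in_centre_and_squid:
  assumes "simplex V E S" "S \<subseteq> insert (a, None) {z. fst z = v}" "v \<in> VB"
  obtains l where "l \<in> L v" "S \<subseteq> {(a, None), (v, None), (v, Some l)}"
proof -
  have "\<exists>l\<in>L v. \<forall>l'. (v, Some l') \<in> S \<longrightarrow> l' = l"
  proof (cases "\<exists>l. (v, Some l) \<in> S")
    case True
    then obtain l where l: "(v, Some l) \<in> S"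
      by blast
    then have "l \<in> L v"
      using assms(1) unfolding simplex_def by auto
    moreover have "l' = l" if "(v, Some l') \<in> S" for l'
      using that l assms(1) edge_irrefl unfolding simplex_def by fastforce
    ultimately show ?thesis
      by blast
  next
    case False
    with assms(3) leaves_nonempty show ?thesis
      by blast
  qed
  then obtain l where "l \<in> L v" and unique: "\<forall>l'. (v, Some l') \<in> S \<longrightarrow> l' = l"
    by blast
  moreover have "S \<subseteq> {(a, None), (v, None), (v, Some l)}"
  proof
    fix s assume "s \<in> S"
    with assms(2) unique show "s \<in> {(a, None), (v, None), (v, Some l)}"
      by (cases s; cases "snd s") auto
  qed
  ultimately show thesis
    using that by blast
qed

lemma simplex_near_centre:
  assumes "simplex V E S" "\<forall>r\<in>S. r = (w, None) \<or> EB (fst r) w" "EB z0 w"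
  obtains z where "EB z w" "S \<subseteq> insert (w, None) {r. fst r = z}"
proof (cases "S \<subseteq> {(w, None)}")
  case True
  with that assms(3) show thesis
    by blast
next
  case False
  then obtain s where s: "s \<in> S" "s \<noteq> (w, None)"
    by blast
  with assms(2) have "EB (fst s) w"
    by blast
  moreover have "fst s' = fst s" if "s' \<in> S" "s' \<noteq> (w, None)" for s'
  proof (rule ccontr)
    assume "fst s' \<noteq> fst s"
    moreover have "E s s'"
      using assms(1) s that \<open>fst s' \<noteq> fst s\<close> unfolding simplex_def by auto
    ultimately have "EB (fst s) (fst s')"
      using E_distinct_base by auto
    moreover have "EB (fst s') w"
      using assms(2) that by blast
    ultimately show False
      using \<open>EB (fst s) w\<close> no_triangle edge_sym by blast
  qed
  ultimately show thesis
    using that by blast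
qed

lemma ex_join_within_squid:
  assumes "\<Omega> \<subseteq> V" "\<forall>s\<in>\<Omega>. fst s = v" "(v, Some l) \<in> \<Omega>" "S \<subseteq> \<Omega>" "simplex V E S"
  shows "\<exists>P Q. S \<subseteq> P \<and> link_is_join V E \<Omega> P Q"
proof -
  have "v \<in> VB"
    using assms(1,3) by auto
  moreover have "S \<subseteq> insert (v, None) {z. fst z = v}"
    using assms(2,4) by auto
  ultimately obtain k where k: "k \<in> L v" "S \<subseteq> {(v, None), (v, Some k)}"
    using simplex_in_centre_and_squid[OF assms(5)] by (metis insert_absorb2)
  \<comment> \<open>\<open>P\<close> contains the centre iff \<open>\<Omega>\<close> does, which is all the link depends on\<close>
  define P where "P = insert (v, Some k) (\<Omega> \<inter> {(v, None)})"
  have "P \<subseteq> V" "\<forall>s\<in>P. fst s = v" "(v, Some k) \<in> P"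
    using assms(1) k \<open>v \<in> VB\<close> unfolding P_def by auto
  moreover have "{(v, None)} - P = {(v, None)} - \<Omega>"
    unfolding P_def by blast
  ultimately have "fst (link V E P) = fst (link V E \<Omega>)"
    using link_within_squid[OF assms(1-3)] link_within_squid[of P v k] by simp
  moreover have "simplex V E P"
    using k \<open>v \<in> VB\<close> unfolding P_def simplex_def by auto
  ultimately have "link_is_join V E \<Omega> P {}"
    by (simp add: link_is_join_same_link)
  moreover have "S \<subseteq> P"
    using k assms(4) unfolding P_def by auto
  ultimately show ?thesis
    by blast
qed

lemma ex_join_centre_and_squid:
  assumes "EB u v" "\<Omega> \<subseteq> V" "\<forall>s\<in>\<Omega>. s = (u, None) \<or> fst s = v" "(u, None) \<in> \<Omega>" "(v, Some l) \<in> \<Omega>"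
    and "S \<subseteq> \<Omega>" "simplex V E S"
  shows "\<exists>P Q. S \<subseteq> P \<and> link_is_join V E \<Omega> P Q"
proof -
  have "u \<in> VB" "v \<in> VB" "u \<noteq> v"
    using assms(1) edge_in_VB edge_irrefl by auto
  moreover have "S \<subseteq> insert (u, None) {z. fst z = v}"
    using assms(3,6) by auto
  ultimately obtain k where k: "k \<in> L v" "S \<subseteq> {(u, None), (v, None), (v, Some k)}"
    using simplex_in_centre_and_squid[OF assms(7)] by blast
  define P where "P = {(u, None), (v, Some k)} \<union> (\<Omega> \<inter> {(v, None)})"
  have "P \<subseteq> V" "\<forall>s\<in>P. s = (u, None) \<or> fst s = v" "(u, None) \<in> P" "(v, Some k) \<in> P"
    using assms(2) k \<open>u \<in> VB\<close> \<open>v \<in> VB\<close> unfolding P_def by auto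
  moreover have "{(v, None)} - P = {(v, None)} - \<Omega>"
    using \<open>u \<noteq> v\<close> unfolding P_def by blast
  ultimately have "fst (link V E P) = fst (link V E \<Omega>)"
    using link_centre_and_squid[OF assms(1-5)] link_centre_and_squid[OF assms(1), of P k] by simp
  moreover have "simplex V E P"
    using assms(1) k \<open>u \<in> VB\<close> \<open>v \<in> VB\<close> unfolding P_def simplex_def by (auto simp: edge_sym)
  ultimately have "link_is_join V E \<Omega> P {}"
    by (simp add: link_is_join_same_link)
  moreover have "S \<subseteq> P"
    using k assms(6) unfolding P_def by auto
  ultimately show ?thesis
    by blast
qed

lemma ex_join_distant_pair_leaf:
  assumes "\<Omega> \<subseteq> V" "p \<in> \<Omega>" "q \<in> \<Omega>" "fst p \<noteq> fst q" "\<not> EB (fst p) (fst q)"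
    and "(w, Some m) \<in> fst (link V E \<Omega>)" "S \<subseteq> \<Omega>" "simplex V E S"
  shows "\<exists>P Q. S \<subseteq> P \<and> link_is_join V E \<Omega> P Q"
proof -
  note near = neighbours_of_link_leaf[OF assms(6)]
    and link_\<Omega> = link_of_distant_pair[OF assms(1-6)]
  obtain r where "r \<in> \<Omega>" "r \<noteq> (w, None)"
    using assms(2-4) by blast
  with near have "EB (fst r) w"
    by blast
  then obtain z where z: "EB z w" "S \<subseteq> insert (w, None) {r. fst r = z}"
    using simplex_near_centre[OF assms(8)] near assms(7) by blast
  then have "z \<in> VB" "w \<in> VB"
    using edge_in_VB by auto
  then obtain k where k: "k \<in> L z" "S \<subseteq> {(w, None), (z, None), (z, Some k)}"
    using simplex_in_centre_and_squid[OF assms(8) z(2)] by blast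
  let ?P = "{(w, None), (z, None), (z, Some k)}" and ?Q = "{(w, None)} - \<Omega>"
  have "?P \<subseteq> V"
    using k(1) \<open>z \<in> VB\<close> \<open>w \<in> VB\<close> by auto
  then have link_P: "fst (link V E ?P) = {x\<in>V. fst x = w \<and> snd x \<noteq> None}"
    using link_centre_and_squid[of w z ?P k] z(1) edge_sym by auto
  have "link_is_join V E \<Omega> ?P ?Q"
    unfolding link_is_join_def link_P link_\<Omega>
    using z(1) k(1) \<open>z \<in> VB\<close> \<open>w \<in> VB\<close> by (auto simp: simplex_def edge_sym)
  with k show ?thesis
    by blast
qed

lemma centre_or_squid_of_sibling_leaves:
  assumes S: "simplex V E S" and D: "simplex V E D"
    and p: "(v, Some l) \<in> S \<union> D" and q: "(v, Some l') \<in> S \<union> D" "l \<noteq> l'"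
    and x: "(u, Some m) \<in> fst (link V E (S \<union> D))" and r: "r \<in> S \<union> D"
  shows "r = (u, None) \<or> fst r = v"
proof (rule disjCI)
  assume "fst r \<noteq> v"
  moreover have "\<not> E (v, Some l) (v, Some l')"
    using edge_irrefl by simp
  moreover have "r \<noteq> (v, Some l)" "r \<noteq> (v, Some l')"
    using \<open>fst r \<noteq> v\<close> by auto
  ultimately have "E r (v, Some l) \<or> E r (v, Some l')"
    using simplex_union_adjacent[OF S D p q(1) r] q(2) by blast
  then have "EB (fst r) v"
    using E_distinct_base \<open>fst r \<noteq> v\<close> by fastforce
  moreover have "E (u, Some m) (v, Some l)"
    using x p unfolding in_link_iff by blast
  then have "EB u v"
    by simp
  moreover have "r = (u, None) \<or> EB (fst r) u"
    using x r neighbour_of_leaf E_sym unfolding in_link_iff by blast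
  ultimately show "r = (u, None)"
    using no_triangle edge_sym by blast
qed

lemma ex_join_sibling_leaves:
  assumes S: "simplex V E S" and D: "simplex V E D"
    and p: "(v, Some l) \<in> S \<union> D" and q: "(v, Some l') \<in> S \<union> D" "l \<noteq> l'"
    and x: "x \<in> fst (link V E (S \<union> D))" and y: "y \<in> fst (link V E (S \<union> D))" "x \<noteq> y" "\<not> E x y"
  shows "\<exists>P Q. S \<subseteq> P \<and> link_is_join V E (S \<union> D) P Q"
proof -
  have "S \<union> D \<subseteq> V"
    using S D unfolding simplex_def by blast
  from x y have "x \<in> V" "y \<in> V"
    unfolding in_link_iff by auto
  from this y(2,3) show ?thesis
  proof (cases rule: non_adjacent_cases)
    case (leaves u m m')
    have "E (u, Some m) (v, Some l)"
      using x p leaves(1) unfolding in_link_iff by blast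
    then have "EB u v"
      by simp
    show ?thesis
    proof (cases "\<forall>s\<in>S \<union> D. fst s = v")
      case True
      then show ?thesis
        using ex_join_within_squid[OF \<open>S \<union> D \<subseteq> V\<close> _ p Un_upper1 S] by blast
    next
      case False
      have centre_or_squid: "r = (u, None) \<or> fst r = v" if "r \<in> S \<union> D" for r
        using centre_or_squid_of_sibling_leaves[OF S D p q x[unfolded leaves(1)] that] .
      with False have "(u, None) \<in> S \<union> D"
        by blast
      then show ?thesis
        using ex_join_centre_and_squid[OF \<open>EB u v\<close> \<open>S \<union> D \<subseteq> V\<close> _ _ p] centre_or_squid S by blast
    qed
  next
    case distant
    have common: "EB (fst r) (fst x)" "EB (fst r) (fst y)" if "r \<in> S \<union> D" for r
      using common_neighbour_of_distant[OF distant] x y that unfolding in_link_iff by blast+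
    have "fst s = v" if "s \<in> S \<union> D" for s
      using common[OF that] common[OF p]
      by (intro common_neighbour_unique[OF _ _ _ _ distant]) simp_all
    then show ?thesis
      using ex_join_within_squid[OF \<open>S \<union> D \<subseteq> V\<close> _ p Un_upper1 S] by blast
  qed
qed

lemma ex_join_distant_pair:
  assumes "\<Omega> \<subseteq> V" "p \<in> \<Omega>" "q \<in> \<Omega>" "fst p \<noteq> fst q" "\<not> EB (fst p) (fst q)"
    and x: "x \<in> fst (link V E \<Omega>)" and y: "y \<in> fst (link V E \<Omega>)" "x \<noteq> y" "\<not> E x y"
    and "S \<subseteq> \<Omega>" "simplex V E S"
  shows "\<exists>P Q. S \<subseteq> P \<and> link_is_join V E \<Omega> P Q"
proof -
  from x y have "x \<in> V" "y \<in> V"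
    unfolding in_link_iff by auto
  from this y(2,3) show ?thesis
  proof (cases rule: non_adjacent_cases)
    case (leaves u m m')
    show ?thesis
      using ex_join_distant_pair_leaf[OF assms(1-5) x[unfolded leaves(1)] assms(10,11)] .
  next
    case distant
    have common: "EB (fst r) (fst x)" "EB (fst r) (fst y)" if "r \<in> \<Omega>" for r
      using common_neighbour_of_distant[OF distant] x y that unfolding in_link_iff by blast+
    have "fst p = fst q"
      using common[OF assms(2)] common[OF assms(3)]
      by (intro common_neighbour_unique[OF _ _ _ _ distant])
    with assms(4) show ?thesis
      by blast
  qed
qed

lemma ex_join_union:
  assumes S: "simplex V E S" and D: "simplex V E D"
  shows "\<exists>P Q. S \<subseteq> P \<and> link_is_join V E (S \<union> D) P Q"
proof (cases "simplex V E (S \<union> D)")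
  case True
  then show ?thesis
    using link_is_join_simplex by blast
next
  case False
  with S D have "\<not> (\<forall>p\<in>S \<union> D. \<forall>q\<in>S \<union> D. p \<noteq> q \<longrightarrow> E p q)"
    unfolding simplex_def by simp
  then obtain p q where pq: "p \<in> S \<union> D" "q \<in> S \<union> D" "p \<noteq> q" "\<not> E p q"
    by blast
  let ?Lk = "fst (link V E (S \<union> D))"
  show ?thesis
  proof (cases "\<forall>x\<in>?Lk. \<forall>y\<in>?Lk. x \<noteq> y \<longrightarrow> E x y")
    case True
    moreover have "finite ?Lk"
      using clique_finite_card_le_4[OF True] by blast
    moreover have "?Lk \<subseteq> V"
      by (auto simp: in_link_iff)
    ultimately have "simplex V E ?Lk"
      unfolding simplex_def by blast
    have "card T \<le> 4" if "simplex V E T" for T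
      using that clique_finite_card_le_4 unfolding simplex_def by blast
    then obtain M where "maximal_simplex V E M" "S \<subseteq> M"
      using exists_maximal_simplex_superset S by blast
    with \<open>simplex V E ?Lk\<close> show ?thesis
      using link_is_join_maximal_simplex E_sym by blast
  next
    case False
    then obtain x y where xy: "x \<in> ?Lk" "y \<in> ?Lk" "x \<noteq> y" "\<not> E x y"
      by blast
    have "S \<union> D \<subseteq> V"
      using S D unfolding simplex_def by blast
    with pq have "p \<in> V" "q \<in> V"
      by auto
    from this pq(3,4) show ?thesis
    proof (cases rule: non_adjacent_cases)
      case (leaves v l l')
      then show ?thesis
        using ex_join_sibling_leaves[OF S D] pq xy by blast
    next
      case distant
      then show ?thesis
        using ex_join_distant_pair[OF \<open>S \<union> D \<subseteq> V\<close> pq(1,2) _ _ xy] S by blast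
    qed
  qed
qed

end

theorem mainTheorem20:
  fixes VB :: "'v set" and EB :: "'v \<Rightarrow> 'v \<Rightarrow> bool" and L :: "'v \<Rightarrow> 'l set"
    and \<Sigma> \<Delta> :: "('v \<times> 'l option) set"
  assumes "simplicial_graph VB EB"
    and "triangle_free VB EB"
    and "square_free VB EB"
    and "no_isolated_vertex VB EB"
    and "\<forall>v\<in>VB. L v \<noteq> {}"
    and "simplex (blowup_V VB L) (blowup_E VB EB L) \<Sigma>"
    and "\<not> maximal_simplex (blowup_V VB L) (blowup_E VB EB L) \<Sigma>"
    and "simplex (blowup_V VB L) (blowup_E VB EB L) \<Delta>"
    and "\<not> maximal_simplex (blowup_V VB L) (blowup_E VB EB L) \<Delta>"
  shows "\<exists>\<Pi> \<Psi>. simplex (blowup_V VB L) (blowup_E VB EB L) \<Pi> \<and>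
           simplex (blowup_V VB L) (blowup_E VB EB L) \<Psi> \<and> \<Sigma> \<subseteq> \<Pi> \<and>
           fst (link (blowup_V VB L) (blowup_E VB EB L) \<Pi>) \<inter> \<Psi> = {} \<and>
           graph_inter (link (blowup_V VB L) (blowup_E VB EB L) \<Sigma>)
                       (link (blowup_V VB L) (blowup_E VB EB L) \<Delta>)
           = graph_join (link (blowup_V VB L) (blowup_E VB EB L) \<Pi>)
                        (induced (blowup_E VB EB L) \<Psi>)"
proof -
  interpret blowup VB EB L
    using assms(1-3,5) by unfold_locales
  obtain \<Pi> \<Psi> where "\<Sigma> \<subseteq> \<Pi>" and join: "link_is_join V E (\<Sigma> \<union> \<Delta>) \<Pi> \<Psi>"
    using ex_join_union[OF assms(6,8)] by blast
  then have "graph_inter (link V E \<Sigma>) (link V E \<Delta>) = graph_join (link V E \<Pi>) (induced E \<Psi>)"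
    unfolding graph_inter_link using link_is_join_graph_join E_sym by blast
  with \<open>\<Sigma> \<subseteq> \<Pi>\<close> join show ?thesis
    unfolding link_is_join_def by blast
qed

end
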